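(* Let $X$ be a compact Hausdorff space and let $a\in\mathrm{M}_m(\mathrm{C}(X))$ be block diagonal, $a=\mathrm{diag}(0_k,a_1,\dots,a_n)$, where $0_k$ is the $k\times k$ zero matrix and $a_i\in\mathrm{M}_{k_i}(\mathrm{C}(X))$ for natural numbers $k_1,\dots,k_n$ with $k+\sum_i k_i=m$. If $k>\max_{1\le i\le n}k_i$, then $a$ can be approximated arbitrarily closely in norm by invertible elements of $\mathrm{M}_m(\mathrm{C}(X))$. *)

theory Defs
  imports "HOL-Analysis.Analysis"
begin

text \<open>Elements of M_m(C(X)) are represented as functions
  X \<Rightarrow> (nat \<Rightarrow> nat \<Rightarrow> complex); only the entries with indices < m matter.\<close>

definition vnorm :: "nat \<Rightarrow> (nat \<Rightarrow> complex) \<Rightarrow> real" where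
  "vnorm m v = sqrt (\<Sum>i<m. (cmod (v i))^2)"

definition mat_vec :: "nat \<Rightarrow> (nat \<Rightarrow> nat \<Rightarrow> complex) \<Rightarrow> (nat \<Rightarrow> complex) \<Rightarrow> (nat \<Rightarrow> complex)" where
  "mat_vec m A v = (\<lambda>i. \<Sum>j<m. A i j * v j)"

definition opnorm :: "nat \<Rightarrow> (nat \<Rightarrow> nat \<Rightarrow> complex) \<Rightarrow> real" where
  "opnorm m A = Sup ((\<lambda>v. vnorm m (mat_vec m A v)) ` {v. vnorm m v \<le> 1})"

definition cmat :: "nat \<Rightarrow> ('a::topological_space \<Rightarrow> nat \<Rightarrow> nat \<Rightarrow> complex) \<Rightarrow> bool" where
  "cmat m a \<longleftrightarrow> (\<forall>i<m. \<forall>j<m. continuous_on UNIV (\<lambda>x. a x i j))"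

definition cmat_norm :: "nat \<Rightarrow> ('a \<Rightarrow> nat \<Rightarrow> nat \<Rightarrow> complex) \<Rightarrow> real" where
  "cmat_norm m a = (SUP x. opnorm m (a x))"

definition cmat_invertible :: "nat \<Rightarrow> ('a::topological_space \<Rightarrow> nat \<Rightarrow> nat \<Rightarrow> complex) \<Rightarrow> bool" where
  "cmat_invertible m a \<longleftrightarrow> (\<exists>b. cmat m b \<and>
     (\<forall>x. \<forall>i<m. \<forall>j<m.
        (\<Sum>l<m. a x i l * b x l j) = (if i = j then 1 else 0) \<and>
        (\<Sum>l<m. b x i l * a x l j) = (if i = j then 1 else 0)))"

text \<open>Block diagonal diag(0_k, a_1, ..., a_n); block i (i < n) has size ks i
  and starts at row/column boff k ks i.\<close>
definition boff :: "nat \<Rightarrow> (nat \<Rightarrow> nat) \<Rightarrow> nat \<Rightarrow> nat" where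
  "boff k ks i = k + (\<Sum>j<i. ks j)"

definition blockdiag :: "nat \<Rightarrow> (nat \<Rightarrow> nat) \<Rightarrow> nat \<Rightarrow> (nat \<Rightarrow> 'a \<Rightarrow> nat \<Rightarrow> nat \<Rightarrow> complex)
    \<Rightarrow> 'a \<Rightarrow> nat \<Rightarrow> nat \<Rightarrow> complex" where
  "blockdiag k ks n blocks x r c =
     (\<Sum>i<n. if boff k ks i \<le> r \<and> r < boff k ks i + ks i \<and>
               boff k ks i \<le> c \<and> c < boff k ks i + ks i
            then blocks i x (r - boff k ks i) (c - boff k ks i) else 0)"

end

theory Submission
  imports Defs
begin

text \<open>Induction on the number of blocks, for diag(1_p, 0_k, a_1, ..., a_n) with all k_i \<le> k.
  Perturb by \<epsilon> at the entries (p + r, p + k + r), r < k_1. On the coordinates from p to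
  p + k + k_1 the perturbed matrix is [[0, \<epsilon>], [0, a_1]] = [[1, 0], [a_1/\<epsilon>, 1]] [[0, \<epsilon>], [0, 0]],
  and the right factor is diag(1_{k_1}, 0_k) after swapping two coordinate intervals and rescaling
  columns. Hence the perturbation is U diag(1_{p+k_1}, 0_k, a_2, ..., a_n) V with U, V continuous
  and invertible. Approximability by invertibles survives such products and uniform limits, so the
  induction ends at the constant diagonal matrix diag(1_p, 0), which is approximated by diag(1_p, \<epsilon>).\<close>

definition mat_mult :: "nat \<Rightarrow> (nat \<Rightarrow> nat \<Rightarrow> complex) \<Rightarrow> (nat \<Rightarrow> nat \<Rightarrow> complex) \<Rightarrow> nat \<Rightarrow> nat \<Rightarrow> complex" where
  "mat_mult m A B = (\<lambda>i j. \<Sum>l<m. A i l * B l j)"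

definition mat_one :: "nat \<Rightarrow> nat \<Rightarrow> complex" where
  "mat_one = (\<lambda>i j. if i = j then 1 else 0)"

definition inverse_pair :: "nat \<Rightarrow> (nat \<Rightarrow> nat \<Rightarrow> complex) \<Rightarrow> (nat \<Rightarrow> nat \<Rightarrow> complex) \<Rightarrow> bool" where
  "inverse_pair m A B \<longleftrightarrow>
     (\<forall>i<m. \<forall>j<m. mat_mult m A B i j = mat_one i j \<and> mat_mult m B A i j = mat_one i j)"

lemma mat_mult_assoc: "mat_mult m (mat_mult m A B) C i j = mat_mult m A (mat_mult m B C) i j"
  unfolding mat_mult_def by (simp add: sum_distrib_left sum_distrib_right mult.assoc) (rule sum.swap)

lemma mat_mult_one_left: "i < m \<Longrightarrow> mat_mult m mat_one A i j = A i j"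
  by (simp add: mat_mult_def mat_one_def if_distrib[of "\<lambda>x. x * _"] cong: if_cong)

lemma mat_mult_one_right: "j < m \<Longrightarrow> mat_mult m A mat_one i j = A i j"
  by (simp add: mat_mult_def mat_one_def if_distrib[of "\<lambda>x. _ * x"] cong: if_cong)

lemma mat_mult_cancel_inner:
  assumes "\<forall>i<m. \<forall>j<m. mat_mult m B B' i j = mat_one i j"
  shows "mat_mult m (mat_mult m A B) (mat_mult m B' C) i j = mat_mult m A C i j"
proof -
  have "mat_mult m B (mat_mult m B' C) l j = C l j" if "l < m" for l
  proof -
    have "mat_mult m B (mat_mult m B' C) l j = mat_mult m mat_one C l j"
      unfolding mat_mult_assoc[symmetric] using assms that by (simp add: mat_mult_def)
    then show ?thesis
      using mat_mult_one_left[OF that] by simp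
  qed
  then show ?thesis
    unfolding mat_mult_assoc by (auto simp: mat_mult_def[of m A] intro!: sum.cong)
qed

lemma inverse_pair_mat_mult:
  assumes "inverse_pair m A A'" "inverse_pair m B B'"
  shows "inverse_pair m (mat_mult m A B) (mat_mult m B' A')"
  using assms by (simp add: inverse_pair_def mat_mult_cancel_inner)

lemma mat_mult_diff_left:
  "mat_mult m A C i j - mat_mult m B C i j = mat_mult m (\<lambda>i j. A i j - B i j) C i j"
  by (simp add: mat_mult_def sum_subtractf left_diff_distrib)

lemma mat_mult_diff_right:
  "mat_mult m A B i j - mat_mult m A C i j = mat_mult m A (\<lambda>i j. B i j - C i j) i j"
  by (simp add: mat_mult_def sum_subtractf right_diff_distrib)

lemma norm_mat_mult_le:
  assumes "\<And>l. l < m \<Longrightarrow> cmod (A i l) \<le> C" "\<And>l. l < m \<Longrightarrow> cmod (B l j) \<le> D"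
  shows "cmod (mat_mult m A B i j) \<le> m * C * D"
proof -
  have "cmod (mat_mult m A B i j) \<le> (\<Sum>l<m. cmod (A i l) * cmod (B l j))"
    unfolding mat_mult_def by (rule order_trans[OF norm_sum]) (simp add: norm_mult)
  also have "\<dots> \<le> (\<Sum>l<m. C * D)"
    using assms by (intro sum_mono mult_mono) (auto intro: order_trans[OF norm_ge_zero])
  finally show ?thesis by simp
qed

lemma inverse_pair_one_plus_nilpotent:
  assumes "\<forall>i<m. \<forall>j<m. mat_mult m N N i j = 0"
  shows "inverse_pair m (\<lambda>i j. mat_one i j + N i j) (\<lambda>i j. mat_one i j - N i j)"
proof -
  have "mat_mult m (\<lambda>i j. mat_one i j + s * N i j) (\<lambda>i j. mat_one i j - s * N i j) i j = mat_one i j"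
    if "i < m" "j < m" for i j and s :: complex
  proof -
    have "mat_mult m (\<lambda>i j. mat_one i j + s * N i j) (\<lambda>i j. mat_one i j - s * N i j) i j =
        mat_mult m mat_one mat_one i j - s * mat_mult m mat_one N i j + s * mat_mult m N mat_one i j
        - s * s * mat_mult m N N i j"
      by (simp add: mat_mult_def algebra_simps sum.distrib sum_subtractf sum_distrib_left)
    then show ?thesis
      using that assms by (simp add: mat_mult_one_left mat_mult_one_right)
  qed
  from this[of _ _ 1] this[of _ _ "-1"] show ?thesis
    by (simp add: inverse_pair_def)
qed

definition monomial_mat :: "(nat \<Rightarrow> nat) \<Rightarrow> (nat \<Rightarrow> complex) \<Rightarrow> nat \<Rightarrow> nat \<Rightarrow> complex" where
  "monomial_mat \<sigma> w = (\<lambda>i j. if i = \<sigma> j then w j else 0)"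

lemma mat_mult_monomial_mat: "\<sigma> j < m \<Longrightarrow> mat_mult m A (monomial_mat \<sigma> w) i j = A i (\<sigma> j) * w j"
  by (simp add: mat_mult_def monomial_mat_def if_distrib cong: if_cong)

lemma inverse_pair_monomial_mat:
  assumes "\<forall>i<m. \<sigma> i < m \<and> \<sigma> (\<sigma> i) = i" "\<forall>i<m. w i \<noteq> 0"
  shows "inverse_pair m (monomial_mat \<sigma> w) (monomial_mat \<sigma> (\<lambda>j. 1 / w (\<sigma> j)))"
  unfolding inverse_pair_def
proof (intro allI impI conjI)
  fix i j assume "i < m" "j < m"
  with assms show "mat_mult m (monomial_mat \<sigma> w) (monomial_mat \<sigma> (\<lambda>j. 1 / w (\<sigma> j))) i j = mat_one i j"
    and "mat_mult m (monomial_mat \<sigma> (\<lambda>j. 1 / w (\<sigma> j))) (monomial_mat \<sigma> w) i j = mat_one i j"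
    by (simp_all add: mat_mult_monomial_mat) (auto simp: monomial_mat_def mat_one_def)
qed

lemma cmat_mat_mult: "cmat m A \<Longrightarrow> cmat m B \<Longrightarrow> cmat m (\<lambda>x. mat_mult m (A x) (B x))"
  unfolding cmat_def mat_mult_def by (auto intro!: continuous_intros)

lemma cmat_const: "cmat m (\<lambda>x. M)"
  unfolding cmat_def by simp

lemma cmat_invertible_iff_inverse_pair:
  "cmat_invertible m A \<longleftrightarrow> (\<exists>B. cmat m B \<and> (\<forall>x. inverse_pair m (A x) (B x)))"
  unfolding cmat_invertible_def inverse_pair_def mat_mult_def mat_one_def by auto

lemma cmat_bounded:
  assumes "compact (UNIV :: 'a::topological_space set)" "cmat m (A :: 'a \<Rightarrow> _)"
  obtains C where "C \<ge> 0" "\<And>x i j. i < m \<Longrightarrow> j < m \<Longrightarrow> cmod (A x i j) \<le> C"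
proof -
  let ?s = "\<lambda>x. \<Sum>i<m. \<Sum>j<m. cmod (A x i j)"
  have "continuous_on UNIV ?s"
    using assms(2) unfolding cmat_def by (intro continuous_intros) auto
  then have "bounded (range ?s)"
    using assms(1) by (intro compact_imp_bounded compact_continuous_image)
  then obtain C where C: "\<And>x. ?s x \<le> C"
    unfolding bounded_iff by (auto dest: order_trans[OF abs_ge_self])
  have bound: "cmod (A x i j) \<le> C" if "i < m" "j < m" for x i j
  proof -
    have "cmod (A x i j) \<le> (\<Sum>j<m. cmod (A x i j))"
      using that by (intro member_le_sum) auto
    also have "\<dots> \<le> ?s x"
      using that by (intro member_le_sum[of i _ "\<lambda>i. \<Sum>j<m. cmod (A x i j)"]) (auto intro: sum_nonneg)
    also have "\<dots> \<le> C"
      by (rule C)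
    finally show ?thesis .
  qed
  then show ?thesis
    by (intro that[of "max C 0"]) (auto simp: le_max_iff_disj)
qed

definition invertibly_approximable :: "nat \<Rightarrow> ('a::topological_space \<Rightarrow> nat \<Rightarrow> nat \<Rightarrow> complex) \<Rightarrow> bool" where
  "invertibly_approximable m f \<longleftrightarrow> (\<forall>\<epsilon>>0. \<exists>g. cmat m g \<and> cmat_invertible m g \<and>
     (\<forall>x. \<forall>i<m. \<forall>j<m. cmod (f x i j - g x i j) < \<epsilon>))"

lemma invertibly_approximable_closed:
  assumes "\<And>\<epsilon>. \<epsilon> > 0 \<Longrightarrow>
    \<exists>g. invertibly_approximable m g \<and> (\<forall>x. \<forall>i<m. \<forall>j<m. cmod (f x i j - g x i j) \<le> \<epsilon>)"
  shows "invertibly_approximable m f"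
  unfolding invertibly_approximable_def
proof (intro allI impI)
  fix \<epsilon> :: real assume "\<epsilon> > 0"
  then obtain g where g: "invertibly_approximable m g"
    and fg: "\<forall>x. \<forall>i<m. \<forall>j<m. cmod (f x i j - g x i j) \<le> \<epsilon> / 2"
    using assms[of "\<epsilon> / 2"] by auto
  then obtain h where h: "cmat m h" "cmat_invertible m h"
    and gh: "\<forall>x. \<forall>i<m. \<forall>j<m. cmod (g x i j - h x i j) < \<epsilon> / 2"
    using \<open>\<epsilon> > 0\<close> unfolding invertibly_approximable_def by (meson half_gt_zero)
  have "cmod (f x i j - h x i j) < \<epsilon>" if "i < m" "j < m" for x i j
  proof -
    have "cmod (f x i j - g x i j) \<le> \<epsilon> / 2" "cmod (g x i j - h x i j) < \<epsilon> / 2"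
      using fg gh that by auto
    then show ?thesis
      using norm_triangle_ineq[of "f x i j - g x i j" "g x i j - h x i j"] by simp
  qed
  with h show "\<exists>h. cmat m h \<and> cmat_invertible m h \<and> (\<forall>x. \<forall>i<m. \<forall>j<m. cmod (f x i j - h x i j) < \<epsilon>)"
    by auto
qed

lemma cmat_invertible_imp_invertibly_approximable:
  "cmat m f \<Longrightarrow> cmat_invertible m f \<Longrightarrow> invertibly_approximable m f"
  unfolding invertibly_approximable_def by (intro allI impI exI[of _ f]) simp

lemma invertibly_approximable_mult:
  fixes f :: "'a::topological_space \<Rightarrow> nat \<Rightarrow> nat \<Rightarrow> complex"
  assumes cpt: "compact (UNIV :: 'a set)" and f: "invertibly_approximable m f"
    and U: "cmat m U" "cmat m U'" "\<And>x. inverse_pair m (U x) (U' x)"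
    and V: "cmat m V" "cmat m V'" "\<And>x. inverse_pair m (V x) (V' x)"
  shows "invertibly_approximable m (\<lambda>x. mat_mult m (mat_mult m (U x) (f x)) (V x))"
  unfolding invertibly_approximable_def
proof (intro allI impI)
  fix \<epsilon> :: real assume "\<epsilon> > 0"
  obtain CU where CU: "CU \<ge> 0" "\<And>x i j. i < m \<Longrightarrow> j < m \<Longrightarrow> cmod (U x i j) \<le> CU"
    using cmat_bounded[OF cpt U(1)] by blast
  obtain CV where CV: "CV \<ge> 0" "\<And>x i j. i < m \<Longrightarrow> j < m \<Longrightarrow> cmod (V x i j) \<le> CV"
    using cmat_bounded[OF cpt V(1)] by blast
  define K where "K = real m * CU * (real m * CV)"
  define \<eta> where "\<eta> = \<epsilon> / (K + 1)"
  have "K \<ge> 0"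
    using CU CV by (simp add: K_def)
  then have \<eta>: "\<eta> > 0" "K * \<eta> < \<epsilon>"
    using \<open>\<epsilon> > 0\<close> by (simp_all add: \<eta>_def field_simps)
  obtain g where g: "cmat m g" "cmat_invertible m g"
    and fg: "\<And>x i j. i < m \<Longrightarrow> j < m \<Longrightarrow> cmod (f x i j - g x i j) < \<eta>"
    using f \<eta>(1) unfolding invertibly_approximable_def by blast
  obtain g' where g': "cmat m g'" "\<And>x. inverse_pair m (g x) (g' x)"
    using g(2) unfolding cmat_invertible_iff_inverse_pair by blast
  let ?h = "\<lambda>x. mat_mult m (mat_mult m (U x) (g x)) (V x)"
  have "cmat m ?h"
    using U(1) g(1) V(1) by (intro cmat_mat_mult)
  moreover have "cmat_invertible m ?h"
    unfolding cmat_invertible_iff_inverse_pair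
  proof (intro exI conjI allI)
    show "cmat m (\<lambda>x. mat_mult m (V' x) (mat_mult m (g' x) (U' x)))"
      using U(2) g'(1) V(2) by (intro cmat_mat_mult)
    show "inverse_pair m (?h x) (mat_mult m (V' x) (mat_mult m (g' x) (U' x)))" for x
      using U(3) g'(2) V(3) by (intro inverse_pair_mat_mult)
  qed
  moreover have "cmod (mat_mult m (mat_mult m (U x) (f x)) (V x) i j - ?h x i j) < \<epsilon>"
    if ij: "i < m" "j < m" for x i j
  proof -
    have inner: "cmod (mat_mult m (U x) (\<lambda>i j. f x i j - g x i j) i l) \<le> real m * CU * \<eta>"
      if "l < m" for l
      using ij that fg CU by (intro norm_mat_mult_le) (auto intro: less_imp_le)
    have "cmod (mat_mult m (mat_mult m (U x) (\<lambda>i j. f x i j - g x i j)) (V x) i j)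
        \<le> real m * (real m * CU * \<eta>) * CV"
      using ij CV
      by (intro norm_mat_mult_le[where A = "mat_mult m (U x) (\<lambda>i j. f x i j - g x i j)", OF inner]) auto
    also have "\<dots> = K * \<eta>"
      by (simp add: K_def)
    finally show ?thesis
      using \<eta>(2) by (simp add: mat_mult_diff_left mat_mult_diff_right)
  qed
  ultimately show "\<exists>h. cmat m h \<and> cmat_invertible m h \<and>
      (\<forall>x. \<forall>i<m. \<forall>j<m. cmod (mat_mult m (mat_mult m (U x) (f x)) (V x) i j - h x i j) < \<epsilon>)"
    by blast
qed

lemma invertibly_approximable_const_diag:
  "invertibly_approximable m (\<lambda>x i j. if i = j then d i else 0)"
proof (rule invertibly_approximable_closed)
  fix \<epsilon> :: real assume "\<epsilon> > 0"
  define w where "w i = (if d i = 0 then complex_of_real \<epsilon> else d i)" for i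
  have "\<forall>i<m. w i \<noteq> 0"
    using \<open>\<epsilon> > 0\<close> by (simp add: w_def)
  then have "inverse_pair m (monomial_mat id w) (monomial_mat id (\<lambda>j. 1 / w (id j)))"
    by (intro inverse_pair_monomial_mat) auto
  then have "invertibly_approximable m (\<lambda>x. monomial_mat id w)"
    by (intro cmat_invertible_imp_invertibly_approximable cmat_const)
      (auto simp: cmat_invertible_iff_inverse_pair intro: cmat_const)
  moreover have "cmod ((if i = j then d i else 0) - monomial_mat id w i j) \<le> \<epsilon>" for i j
    using \<open>\<epsilon> > 0\<close> by (simp add: monomial_mat_def w_def)
  ultimately show "\<exists>g. invertibly_approximable m g \<and>
      (\<forall>x. \<forall>i<m. \<forall>j<m. cmod ((if i = j then d i else 0) - g x i j) \<le> \<epsilon>)"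
    by blast
qed

lemma vnorm_eq_L2_set: "vnorm m v = L2_set (\<lambda>i. cmod (v i)) {..<m}"
  unfolding vnorm_def L2_set_def ..

lemma opnorm_le_sum_norm_entries: "opnorm m A \<le> (\<Sum>i<m. \<Sum>j<m. cmod (A i j))"
  unfolding opnorm_def
proof (rule cSup_least)
  have "(\<lambda>_. 0) \<in> {v. vnorm m v \<le> 1}"
    by (simp add: vnorm_def)
  then show "(\<lambda>v. vnorm m (mat_vec m A v)) ` {v. vnorm m v \<le> 1} \<noteq> {}"
    by blast
next
  fix y assume "y \<in> (\<lambda>v. vnorm m (mat_vec m A v)) ` {v. vnorm m v \<le> 1}"
  then obtain v where v: "vnorm m v \<le> 1" and y: "y = vnorm m (mat_vec m A v)"
    by auto
  have v_entry: "cmod (v j) \<le> 1" if "j < m" for j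
    using member_le_L2_set[of "{..<m}" j "\<lambda>i. cmod (v i)"] that v
    by (simp add: vnorm_eq_L2_set)
  have "y \<le> (\<Sum>i<m. cmod (mat_vec m A v i))"
    unfolding y vnorm_eq_L2_set by (rule L2_set_le_sum) simp
  also have "\<dots> \<le> (\<Sum>i<m. \<Sum>j<m. cmod (A i j) * cmod (v j))"
    unfolding mat_vec_def by (intro sum_mono order_trans[OF norm_sum]) (simp add: norm_mult)
  also have "\<dots> \<le> (\<Sum>i<m. \<Sum>j<m. cmod (A i j))"
    using v_entry by (intro sum_mono mult_left_le) auto
  finally show "y \<le> (\<Sum>i<m. \<Sum>j<m. cmod (A i j))" .
qed

lemma invertibly_approximable_imp_cmat_norm:
  assumes "invertibly_approximable m a"
  shows "\<forall>\<epsilon>>0. \<exists>b. cmat m b \<and> cmat_invertible m b \<and> cmat_norm m (\<lambda>x i j. a x i j - b x i j) < \<epsilon>"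
proof (intro allI impI)
  fix \<epsilon> :: real assume "\<epsilon> > 0"
  define \<eta> where "\<eta> = \<epsilon> / (real m * real m + 1)"
  have \<eta>: "\<eta> > 0" "real m * real m * \<eta> < \<epsilon>"
    using \<open>\<epsilon> > 0\<close> by (simp_all add: \<eta>_def field_simps add_pos_nonneg)
  obtain b where b: "cmat m b" "cmat_invertible m b"
    and ab: "\<And>x i j. i < m \<Longrightarrow> j < m \<Longrightarrow> cmod (a x i j - b x i j) < \<eta>"
    using assms \<eta>(1) unfolding invertibly_approximable_def by blast
  have "opnorm m (\<lambda>i j. a x i j - b x i j) \<le> real m * real m * \<eta>" for x
  proof -
    have "opnorm m (\<lambda>i j. a x i j - b x i j) \<le> (\<Sum>i<m. \<Sum>j<m. cmod (a x i j - b x i j))"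
      by (rule opnorm_le_sum_norm_entries)
    also have "\<dots> \<le> (\<Sum>i<m. \<Sum>j<m. \<eta>)"
      using ab by (intro sum_mono less_imp_le) auto
    finally show ?thesis by simp
  qed
  then have "cmat_norm m (\<lambda>x i j. a x i j - b x i j) \<le> real m * real m * \<eta>"
    unfolding cmat_norm_def by (intro cSUP_least) auto
  with b \<eta>(2) show "\<exists>b. cmat m b \<and> cmat_invertible m b \<and> cmat_norm m (\<lambda>x i j. a x i j - b x i j) < \<epsilon>"
    by force
qed

definition swap_intervals :: "nat \<Rightarrow> nat \<Rightarrow> nat \<Rightarrow> nat \<Rightarrow> nat" where
  "swap_intervals p k q c =
     (if p \<le> c \<and> c < p + q then c + k else if p + k \<le> c \<and> c < p + k + q then c - k else c)"

lemma swap_intervals_involution: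
  "q \<le> k \<Longrightarrow> p + k + q \<le> m \<Longrightarrow> \<forall>c<m. swap_intervals p k q c < m \<and> swap_intervals p k q (swap_intervals p k q c) = c"
  by (auto simp: swap_intervals_def)

(* Right multiplication by M moves the columns [p, p + q) of Z to [p + k, p + k + q), scaled by e;
   left multiplication by 1 + N then puts a below them. *)
lemma absorb_block_factorization:
  fixes a B :: "nat \<Rightarrow> nat \<Rightarrow> complex"
  assumes qk: "q \<le> k" and m: "p + k + q \<le> m" and "e \<noteq> 0" "r < m" "c < m"
    and B: "\<And>r c. r < p + k + q \<or> c < p + k + q \<Longrightarrow> B r c = 0"
  defines "N \<equiv> \<lambda>r l. if p + k \<le> r \<and> r < p + k + q \<and> p \<le> l \<and> l < p + q
                      then a (r - (p + k)) (l - p) / e else 0"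
    and "Z \<equiv> \<lambda>r c. (if r < p + q \<and> r = c then 1 else 0) + B r c"
    and "M \<equiv> monomial_mat (swap_intervals p k q) (\<lambda>c. if p + k \<le> c \<and> c < p + k + q then e else 1)"
  shows "mat_mult m (mat_mult m (\<lambda>r l. mat_one r l + N r l) Z) M r c =
      (if r < p \<and> r = c then 1 else 0) + (if p \<le> r \<and> r < p + q \<and> c = r + k then e else 0) +
      (if p + k \<le> r \<and> r < p + k + q \<and> p + k \<le> c \<and> c < p + k + q
       then a (r - (p + k)) (c - (p + k)) else 0) + B r c"
proof -
  have B_row: "B r c = 0" and B_col: "B c r = 0" if "r < p + k + q" for r c
    using B that by auto
  define W where "W r c = (if r < p \<and> r = c then 1 else 0) + (if p \<le> r \<and> r < p + q \<and> c = r + k then e else 0)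
    + B r c" for r c
  have ZM: "mat_mult m Z M r c = W r c" if "c < m" for r c
  proof -
    have "swap_intervals p k q c < m"
      using that qk m by (auto simp: swap_intervals_def)
    then have "mat_mult m Z M r c =
        Z r (swap_intervals p k q c) * (if p + k \<le> c \<and> c < p + k + q then e else 1)"
      by (simp add: M_def mat_mult_monomial_mat)
    also have "\<dots> = W r c"
      using qk by (auto simp: swap_intervals_def Z_def W_def B_row B_col)
    finally show ?thesis .
  qed
  have NW: "(\<Sum>l<m. N r l * W l c) = (if p + k \<le> r \<and> r < p + k + q \<and> p + k \<le> c \<and> c < p + k + q
       then a (r - (p + k)) (c - (p + k)) else 0)"
  proof -
    have "N r l * W l c = (if l = c - k then (if p + k \<le> r \<and> r < p + k + q \<and> p + k \<le> c \<and> c < p + k + q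
       then a (r - (p + k)) (c - (p + k)) else 0) else 0)" for l
      using \<open>e \<noteq> 0\<close> qk by (auto simp: N_def W_def B_row)
    then show ?thesis
      using \<open>c < m\<close> by (simp add: less_imp_diff_less)
  qed
  have "mat_mult m (mat_mult m (\<lambda>r l. mat_one r l + N r l) Z) M r c = mat_mult m (\<lambda>r l. mat_one r l + N r l) W r c"
    unfolding mat_mult_assoc using ZM \<open>c < m\<close> by (auto simp: mat_mult_def[of m "\<lambda>r l. mat_one r l + N r l"] intro!: sum.cong)
  also have "\<dots> = W r c + (\<Sum>l<m. N r l * W l c)"
    using mat_mult_one_left[OF \<open>r < m\<close>] by (simp add: mat_mult_def distrib_right sum.distrib)
  also have "\<dots> = W r c + (if p + k \<le> r \<and> r < p + k + q \<and> p + k \<le> c \<and> c < p + k + q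
       then a (r - (p + k)) (c - (p + k)) else 0)"
    by (simp only: NW)
  finally show ?thesis
    by (simp add: W_def)
qed

lemma blockdiag_eq_0: "r < off \<or> c < off \<Longrightarrow> blockdiag off ks n blocks x r c = 0"
  unfolding blockdiag_def boff_def by (auto intro!: sum.neutral)

lemma blockdiag_Suc:
  "blockdiag off ks (Suc n) blocks x r c =
     (if off \<le> r \<and> r < off + ks 0 \<and> off \<le> c \<and> c < off + ks 0
      then blocks 0 x (r - off) (c - off) else 0)
     + blockdiag (off + ks 0) (\<lambda>i. ks (Suc i)) n (\<lambda>i. blocks (Suc i)) x r c"
  unfolding blockdiag_def boff_def by (simp only: sum.lessThan_Suc_shift add.assoc) simp

definition id_zero_blockdiag :: "nat \<Rightarrow> nat \<Rightarrow> (nat \<Rightarrow> nat) \<Rightarrow> nat \<Rightarrow> (nat \<Rightarrow> 'a \<Rightarrow> nat \<Rightarrow> nat \<Rightarrow> complex)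
    \<Rightarrow> 'a \<Rightarrow> nat \<Rightarrow> nat \<Rightarrow> complex" where
  "id_zero_blockdiag p k ks n blocks x r c =
     (if r < p \<and> r = c then 1 else 0) + blockdiag (p + k) ks n blocks x r c"

lemma invertibly_approximable_absorb_block:
  fixes blocks :: "nat \<Rightarrow> 'a::topological_space \<Rightarrow> nat \<Rightarrow> nat \<Rightarrow> complex"
  assumes cpt: "compact (UNIV :: 'a set)"
    and IH: "invertibly_approximable m
      (id_zero_blockdiag (p + ks 0) k (\<lambda>i. ks (Suc i)) n (\<lambda>i. blocks (Suc i)))"
    and a: "cmat (ks 0) (blocks 0)" and qk: "ks 0 \<le> k" and m: "p + k + ks 0 \<le> m"
  shows "invertibly_approximable m (id_zero_blockdiag p k ks (Suc n) blocks)"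
proof (rule invertibly_approximable_closed)
  fix \<epsilon> :: real assume "\<epsilon> > 0"
  define q where "q = ks 0"
  define e where "e = complex_of_real \<epsilon>"
  have "e \<noteq> 0"
    using \<open>\<epsilon> > 0\<close> by (simp add: e_def)
  define N where "N x r l = (if p + k \<le> r \<and> r < p + k + q \<and> p \<le> l \<and> l < p + q
      then blocks 0 x (r - (p + k)) (l - p) / e else 0)" for x r l
  define w where "w c = (if p + k \<le> c \<and> c < p + k + q then e else 1)" for c
  let ?L = "\<lambda>x r l. mat_one r l + N x r l"
  let ?M = "monomial_mat (swap_intervals p k q) w"
  let ?Z = "id_zero_blockdiag (p + q) k (\<lambda>i. ks (Suc i)) n (\<lambda>i. blocks (Suc i))"
  have "invertibly_approximable m (\<lambda>x. mat_mult m (mat_mult m (?L x) (?Z x)) ?M)"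
  proof (rule invertibly_approximable_mult[OF cpt IH[folded q_def]])
    have "continuous_on UNIV (\<lambda>x. N x r l)" for r l
    proof (cases "p + k \<le> r \<and> r < p + k + q \<and> p \<le> l \<and> l < p + q")
      case True
      then have "continuous_on UNIV (\<lambda>x. blocks 0 x (r - (p + k)) (l - p))"
        using a by (auto simp: cmat_def q_def)
      with True \<open>e \<noteq> 0\<close> show ?thesis
        by (auto simp: N_def intro!: continuous_intros)
    next
      case False
      show ?thesis
        unfolding N_def if_not_P[OF False] by simp
    qed
    then show "cmat m ?L" "cmat m (\<lambda>x r l. mat_one r l - N x r l)"
      by (auto simp: cmat_def intro!: continuous_intros)
    have "\<forall>i<m. \<forall>j<m. mat_mult m (N x) (N x) i j = 0" for x
      using qk by (auto simp: mat_mult_def N_def q_def intro!: sum.neutral)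
    then show "inverse_pair m (?L x) (\<lambda>r l. mat_one r l - N x r l)" for x
      by (rule inverse_pair_one_plus_nilpotent)
    show "inverse_pair m ?M (monomial_mat (swap_intervals p k q) (\<lambda>j. 1 / w (swap_intervals p k q j)))"
      using swap_intervals_involution[of q k p m] qk m \<open>e \<noteq> 0\<close>
      by (intro inverse_pair_monomial_mat) (auto simp: q_def w_def)
  qed (rule cmat_const)+
  moreover have "cmod (id_zero_blockdiag p k ks (Suc n) blocks x r c
      - mat_mult m (mat_mult m (?L x) (?Z x)) ?M r c) \<le> \<epsilon>" if "r < m" "c < m" for x r c
  proof -
    define B where "B = blockdiag (p + k + q) (\<lambda>i. ks (Suc i)) n (\<lambda>i. blocks (Suc i)) x"
    have "?Z x = (\<lambda>r c. (if r < p + q \<and> r = c then 1 else 0) + B r c)"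
      by (simp add: fun_eq_iff id_zero_blockdiag_def B_def add_ac)
    moreover have "N x = (\<lambda>r l. if p + k \<le> r \<and> r < p + k + q \<and> p \<le> l \<and> l < p + q
        then blocks 0 x (r - (p + k)) (l - p) / e else 0)"
      by (simp add: fun_eq_iff N_def)
    moreover have "w = (\<lambda>c. if p + k \<le> c \<and> c < p + k + q then e else 1)"
      by (simp add: fun_eq_iff w_def)
    moreover have "B r c = 0" if "r < p + k + q \<or> c < p + k + q" for r c
      using that by (simp add: B_def blockdiag_eq_0)
    ultimately have "mat_mult m (mat_mult m (?L x) (?Z x)) ?M r c =
      (if r < p \<and> r = c then 1 else 0) + (if p \<le> r \<and> r < p + q \<and> c = r + k then e else 0) +
      (if p + k \<le> r \<and> r < p + k + q \<and> p + k \<le> c \<and> c < p + k + q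
       then blocks 0 x (r - (p + k)) (c - (p + k)) else 0) + B r c"
      using absorb_block_factorization[of q k p m e r c B "blocks 0 x"] qk m \<open>e \<noteq> 0\<close> that
      by (simp add: q_def)
    moreover have "id_zero_blockdiag p k ks (Suc n) blocks x r c =
      (if r < p \<and> r = c then 1 else 0) +
      (if p + k \<le> r \<and> r < p + k + q \<and> p + k \<le> c \<and> c < p + k + q
       then blocks 0 x (r - (p + k)) (c - (p + k)) else 0) + B r c"
      by (simp add: id_zero_blockdiag_def blockdiag_Suc q_def B_def)
    ultimately show ?thesis
      using \<open>\<epsilon> > 0\<close> by (simp add: e_def)
  qed
  ultimately show "\<exists>g. invertibly_approximable m g \<and>
      (\<forall>x. \<forall>i<m. \<forall>j<m. cmod (id_zero_blockdiag p k ks (Suc n) blocks x i j - g x i j) \<le> \<epsilon>)"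
    by blast
qed

lemma invertibly_approximable_id_zero_blockdiag:
  fixes blocks :: "nat \<Rightarrow> 'a::topological_space \<Rightarrow> nat \<Rightarrow> nat \<Rightarrow> complex"
  assumes "compact (UNIV :: 'a set)"
  shows "\<forall>i<n. cmat (ks i) (blocks i) \<Longrightarrow> \<forall>i<n. ks i \<le> k \<Longrightarrow> p + k + (\<Sum>i<n. ks i) \<le> m \<Longrightarrow>
    invertibly_approximable m (id_zero_blockdiag p k ks n blocks)"
proof (induction n arbitrary: p ks blocks)
  case 0
  have "id_zero_blockdiag p k ks 0 blocks = (\<lambda>x i j. if i = j then (if i < p then 1 else 0) else 0)"
    by (auto simp: fun_eq_iff id_zero_blockdiag_def blockdiag_def)
  then show ?case
    by (simp only: invertibly_approximable_const_diag)
next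
  case (Suc n)
  have sum_Suc: "(\<Sum>i<Suc n. ks i) = ks 0 + (\<Sum>i<n. ks (Suc i))"
    by (rule sum.lessThan_Suc_shift)
  have "invertibly_approximable m (id_zero_blockdiag (p + ks 0) k (\<lambda>i. ks (Suc i)) n (\<lambda>i. blocks (Suc i)))"
    using Suc.prems unfolding sum_Suc by (intro Suc.IH) auto
  with Suc.prems show ?case
    unfolding sum_Suc by (intro invertibly_approximable_absorb_block[OF assms]) auto
qed

theorem lemma4p2:
  fixes a :: "'a::t2_space \<Rightarrow> nat \<Rightarrow> nat \<Rightarrow> complex"
    and blocks :: "nat \<Rightarrow> 'a \<Rightarrow> nat \<Rightarrow> nat \<Rightarrow> complex"
    and ks :: "nat \<Rightarrow> nat"
    and k n m :: nat
  assumes "compact (UNIV :: 'a set)"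
    and "\<forall>i<n. cmat (ks i) (blocks i)"
    and "k + (\<Sum>i<n. ks i) = m"
    and "a = blockdiag k ks n blocks"
    and "\<forall>i<n. ks i < k"
  shows "\<forall>\<epsilon>>0. \<exists>b. cmat m b \<and> cmat_invertible m b \<and>
           cmat_norm m (\<lambda>x i j. a x i j - b x i j) < \<epsilon>"
proof (rule invertibly_approximable_imp_cmat_norm)
  have "a = id_zero_blockdiag 0 k ks n blocks"
    by (simp add: fun_eq_iff assms(4) id_zero_blockdiag_def)
  then show "invertibly_approximable m a"
    using assms by (simp add: invertibly_approximable_id_zero_blockdiag less_imp_le)
qed

end
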